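(* Let $G=(V,E)$ be a (directed) graph with all edges of unit length, let $r\ge0$ be an integer, and let $H=(V,E')$ with $E'\subseteq E$. Then $H$ is an $r$-fault tolerant $2$-spanner of $G$ if and only if for every $(u,v)\in E$, either $(u,v)\in E'$ or there are at least $r+1$ paths of length $2$ from $u$ to $v$ in $E'$.
   Context: $d_H$ denotes the (directed) shortest-path distance in $H$ with unit edge lengths. For $F\subseteq V$, $G\setminus F$ denotes $G$ with the vertices of $F$ and incident edges removed. $H$ is an $r$-fault tolerant $2$-spanner of $G$ if for every $F\subseteq V$ with $|F|\le r$ and all $u,v\in V\setminus F$, $d_{H\setminus F}(u,v)\le 2\,d_{G\setminus F}(u,v)$. Paths of length 2 from $u$ to $v$ are distinguished by their middle vertex. *)

theory Defs
  imports Main "HOL-Library.Extended_Nat"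
begin

definition remove_vertices :: "('a \<times> 'a) set \<Rightarrow> 'a set \<Rightarrow> ('a \<times> 'a) set" where
  "remove_vertices E F = {(x, y). (x, y) \<in> E \<and> x \<notin> F \<and> y \<notin> F}"

(* directed shortest-path distance with unit edge lengths; infinity if unreachable *)
definition dist :: "('a \<times> 'a) set \<Rightarrow> 'a \<Rightarrow> 'a \<Rightarrow> enat" where
  "dist E u v = (INF n \<in> {n. (u, v) \<in> E ^^ n}. enat n)"

definition ft_2spanner :: "'a set \<Rightarrow> ('a \<times> 'a) set \<Rightarrow> ('a \<times> 'a) set \<Rightarrow> nat \<Rightarrow> bool" where
  "ft_2spanner V E E' r \<longleftrightarrow>
     (\<forall>F. F \<subseteq> V \<longrightarrow> card F \<le> r \<longrightarrow>
        (\<forall>u \<in> V - F. \<forall>v \<in> V - F.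
           dist (remove_vertices E' F) u v \<le> 2 * dist (remove_vertices E F) u v))"

(* paths of length 2 from u to v in E', identified by their middle vertex *)
definition two_paths :: "('a \<times> 'a) set \<Rightarrow> 'a \<Rightarrow> 'a \<Rightarrow> 'a set" where
  "two_paths E' u v = {w. (u, w) \<in> E' \<and> (w, v) \<in> E'}"

end

theory Submission
  imports Defs
begin

text \<open>If every edge (u, v) of E outside E' has r+1 detours u \<rightarrow> w \<rightarrow> v in E', then deleting
  at most r vertices leaves every surviving edge of G with a detour of length at most 2 in H, so
  a shortest path of length d in G - F becomes a path of length at most 2d in H - F.
  Conversely, deleting F = the set of detour middles of a missing edge (u, v) leaves u and v at
  distance 1 in G - F but at distance more than 2 in H - F, so F must have more than r vertices.\<close>

lemma dist_le_enat_iff: "dist R u v \<le> enat k \<longleftrightarrow> (\<exists>n\<le>k. (u, v) \<in> R ^^ n)"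
proof
  assume "\<exists>n\<le>k. (u, v) \<in> R ^^ n"
  then obtain n where "n \<le> k" "(u, v) \<in> R ^^ n" by blast
  then have "dist R u v \<le> enat n" unfolding dist_def by (auto intro: INF_lower2)
  with \<open>n \<le> k\<close> show "dist R u v \<le> enat k" by (meson enat_ord_simps(1) order_trans)
next
  assume le: "dist R u v \<le> enat k"
  let ?A = "enat ` {n. (u, v) \<in> R ^^ n}"
  have "?A \<noteq> {}"
  proof
    assume "?A = {}"
    then have "dist R u v = \<infinity>" unfolding dist_def by (simp add: Inf_enat_def)
    with le show False by simp
  qed
  then have "dist R u v \<in> ?A"
    unfolding dist_def by (simp add: Inf_enat_def del: image_is_empty) (metis LeastI ex_in_conv)
  with le show "\<exists>n\<le>k. (u, v) \<in> R ^^ n" by auto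
qed

lemma relpow_stretch:
  fixes R S :: "'a rel"
  assumes "\<And>x y. (x, y) \<in> R \<Longrightarrow> \<exists>k\<le>c. (x, y) \<in> S ^^ k"
  shows "(u, v) \<in> R ^^ n \<Longrightarrow> \<exists>m\<le>c * n. (u, v) \<in> S ^^ m"
proof (induction n arbitrary: v)
  case 0
  then show ?case by (intro exI[of _ 0]) auto
next
  case (Suc n)
  then obtain z where "(u, z) \<in> R ^^ n" "(z, v) \<in> R" by auto
  then obtain m k where "m \<le> c * n" "(u, z) \<in> S ^^ m" "k \<le> c" "(z, v) \<in> S ^^ k"
    using Suc.IH assms by blast
  then have "m + k \<le> c * Suc n" "(u, v) \<in> S ^^ (m + k)" by (auto simp: relpow_add)
  then show ?case by blast
qed

lemma dist_stretch:
  assumes "0 < c" and "\<And>x y. (x, y) \<in> R \<Longrightarrow> dist S x y \<le> enat c"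
  shows "dist S u v \<le> enat c * dist R u v"
proof (cases "dist R u v")
  case (enat d)
  then have "dist R u v \<le> enat d" by simp
  then obtain n where "n \<le> d" "(u, v) \<in> R ^^ n"
    by (auto simp: dist_le_enat_iff)
  moreover have "\<exists>k\<le>c. (x, y) \<in> S ^^ k" if "(x, y) \<in> R" for x y
    using assms(2)[OF that] by (simp add: dist_le_enat_iff)
  ultimately obtain m where "m \<le> c * n" "(u, v) \<in> S ^^ m"
    using relpow_stretch[of R c S] by blast
  moreover have "c * n \<le> c * d" using \<open>n \<le> d\<close> by simp
  ultimately have "dist S u v \<le> enat (c * d)"
    unfolding dist_le_enat_iff using le_trans by blast
  then show ?thesis using enat by simp
next
  case infinity
  then show ?thesis using \<open>0 < c\<close> by (simp add: imult_infinity_right)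
qed

lemma dist_le_2_iff:
  "dist R u v \<le> 2 \<longleftrightarrow> u = v \<or> (u, v) \<in> R \<or> (\<exists>w. (u, w) \<in> R \<and> (w, v) \<in> R)"
proof -
  have "dist R u v \<le> 2 \<longleftrightarrow> (\<exists>n\<le>2. (u, v) \<in> R ^^ n)"
    using dist_le_enat_iff[of R u v 2] by (simp add: numeral_eq_enat)
  also have "\<dots> \<longleftrightarrow> (u, v) \<in> R ^^ 0 \<or> (u, v) \<in> R ^^ 1 \<or> (u, v) \<in> R ^^ 2"
    by (metis One_nat_def le_Suc_eq le_zero_eq numeral_2_eq_2 zero_le_numeral one_le_numeral)
  also have "\<dots> \<longleftrightarrow> u = v \<or> (u, v) \<in> R \<or> (\<exists>w. (u, w) \<in> R \<and> (w, v) \<in> R)"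
    by (auto simp: numeral_2_eq_2 relcomp_unfold)
  finally show ?thesis .
qed

lemma mem_remove_vertices [simp]:
  "(x, y) \<in> remove_vertices R F \<longleftrightarrow> (x, y) \<in> R \<and> x \<notin> F \<and> y \<notin> F"
  by (simp add: remove_vertices_def)

lemma two_paths_subset:
  assumes "R \<subseteq> V \<times> V" shows "two_paths R u v \<subseteq> V"
  using assms by (auto simp: two_paths_def)

lemma ft_2spanner_imp_many_two_paths:
  assumes spanner: "ft_2spanner V E E' r"
    and "E \<subseteq> V \<times> V" and irrefl: "\<forall>x. (x, x) \<notin> E" and "E' \<subseteq> E"
    and uv: "(u, v) \<in> E" "(u, v) \<notin> E'"
  shows "card (two_paths E' u v) \<ge> r + 1"
proof (rule ccontr)
  define F where "F = two_paths E' u v"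
  assume "\<not> card (two_paths E' u v) \<ge> r + 1"
  then have "card F \<le> r" by (simp add: F_def)
  moreover have "F \<subseteq> V"
    using two_paths_subset[of E' V u v] \<open>E \<subseteq> V \<times> V\<close> \<open>E' \<subseteq> E\<close> unfolding F_def by blast
  moreover have "u \<in> V - F" "v \<in> V - F"
    using uv irrefl \<open>E \<subseteq> V \<times> V\<close> \<open>E' \<subseteq> E\<close> unfolding F_def two_paths_def by auto
  ultimately have "dist (remove_vertices E' F) u v \<le> 2 * dist (remove_vertices E F) u v"
    using spanner unfolding ft_2spanner_def by blast
  moreover have "dist (remove_vertices E F) u v \<le> 1"
    using \<open>u \<in> V - F\<close> \<open>v \<in> V - F\<close> uv unfolding one_enat_def dist_le_enat_iff
    by (intro exI[of _ 1]) auto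
  ultimately have "dist (remove_vertices E' F) u v \<le> 2"
    using mult_left_mono[of _ 1 2] order_trans by fastforce
  then show False
    using uv irrefl unfolding dist_le_2_iff by (auto simp: F_def two_paths_def)
qed

lemma many_two_paths_imp_ft_2spanner:
  assumes "finite V"
    and many: "\<forall>(u, v) \<in> E. (u, v) \<in> E' \<or> card (two_paths E' u v) \<ge> r + 1"
  shows "ft_2spanner V E E' r"
  unfolding ft_2spanner_def
proof (intro allI impI ballI)
  fix F u v
  assume "F \<subseteq> V" "card F \<le> r"
  then have "finite F" using \<open>finite V\<close> finite_subset by blast
  have "dist (remove_vertices E' F) x y \<le> enat 2" if "(x, y) \<in> remove_vertices E F" for x y
  proof (cases "(x, y) \<in> E'")
    case True
    then show ?thesis using that unfolding numeral_eq_enat[symmetric] dist_le_2_iff by simp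
  next
    case False
    then have "card F < card (two_paths E' x y)" using many that \<open>card F \<le> r\<close> by auto
    then obtain w where "w \<in> two_paths E' x y" "w \<notin> F"
      using card_mono[OF \<open>finite F\<close>] by (meson leD subsetI)
    then show ?thesis
      using that unfolding numeral_eq_enat[symmetric] dist_le_2_iff two_paths_def by auto
  qed
  then have "dist (remove_vertices E' F) u v \<le> enat 2 * dist (remove_vertices E F) u v"
    by (intro dist_stretch) auto
  then show "dist (remove_vertices E' F) u v \<le> 2 * dist (remove_vertices E F) u v"
    by (simp add: numeral_eq_enat)
qed

theorem lemma3p1:
  fixes V :: "'a set" and E E' :: "('a \<times> 'a) set" and r :: nat
  assumes "finite V"
    and "E \<subseteq> V \<times> V"
    and "\<forall>x. (x, x) \<notin> E"
    and "E' \<subseteq> E"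
  shows "ft_2spanner V E E' r \<longleftrightarrow>
           (\<forall>(u, v) \<in> E. (u, v) \<in> E' \<or> card (two_paths E' u v) \<ge> r + 1)"
  using ft_2spanner_imp_many_two_paths[OF _ assms(2-4)]
    many_two_paths_imp_ft_2spanner[OF assms(1)]
  by blast

end
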